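(* Let $(Q,\cdot)$ be a quasigroup satisfying $(xx)(yz)=(x(xy))z$ for all $x,y,z\in Q$ (an LC1-quasigroup). Then $Q$ satisfies $x(y(yz))=(x(yy))z$ for all $x,y,z\in Q$ (i.e. $Q$ is an LC4-quasigroup).
   Context: A quasigroup is a set $Q$ with a binary operation $\cdot$ (written as juxtaposition) such that for all $a,b\in Q$ each of the equations $ax=b$ and $ya=b$ has a unique solution in $Q$. *)

theory Defs
  imports Main
begin

definition quasigroup :: "('a \<Rightarrow> 'a \<Rightarrow> 'a) \<Rightarrow> bool" where
  "quasigroup mult \<longleftrightarrow>
     (\<forall>a b. (\<exists>!x. mult a x = b) \<and> (\<exists>!y. mult y a = b))"

end

theory Submission
  imports Defs
begin

text \<open>
Taking \<open>y\<close> to be a local right identity of \<open>x\<close> in LC1 and cancelling \<open>x x\<close> shows that it is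
a left identity; left identities of a quasigroup coincide, so \<open>Q\<close> is a loop. With \<open>z = 1\<close>,
LC1 says \<open>(x x) y = x (x y)\<close>, so LC1 becomes \<open>L\<^bsub>x(xy)\<^esub> = L\<^sub>x L\<^sub>x L\<^sub>y\<close> for the left
translations. For \<open>p y = 1\<close> it gives \<open>L\<^sub>p = L\<^bsub>p(py)\<^esub> = L\<^sub>p L\<^sub>p L\<^sub>y\<close>, hence \<open>L\<^sub>p L\<^sub>y = id\<close>, so \<open>Q\<close> has two-sided
inverses with the left inverse property. Applying the operator identity to \<open>p = x(xy)\<close> in two
ways and cancelling \<open>L\<^sub>x L\<^sub>x\<close> gives \<open>L\<^bsub>y(x(x(yu)))\<^esub> = L\<^sub>y L\<^sub>x L\<^sub>x L\<^sub>y L\<^sub>u\<close>; choosing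
\<open>u = y\<^sup>-\<^sup>1\<close> yields \<open>L\<^bsub>y(xx)\<^esub> = L\<^sub>y L\<^sub>x L\<^sub>x\<close>, which is LC4.
\<close>

lemma quasigroup_left_cancel:
  assumes "quasigroup mult" and "mult a x = mult a y"
  shows "x = y"
  using assms unfolding quasigroup_def by blast

lemma quasigroup_right_cancel:
  assumes "quasigroup mult" and "mult x a = mult y a"
  shows "x = y"
  using assms unfolding quasigroup_def by blast

lemma quasigroup_left_solvable:
  assumes "quasigroup mult"
  obtains x where "mult a x = b"
  using assms unfolding quasigroup_def by blast

lemma quasigroup_right_solvable:
  assumes "quasigroup mult"
  obtains y where "mult y a = b"
  using assms unfolding quasigroup_def by blast

locale lc1_quasigroup =
  fixes mult :: "'a \<Rightarrow> 'a \<Rightarrow> 'a"  (infixl "\<cdot>" 70)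
  assumes quasigroup: "quasigroup mult"
    and lc1: "\<And>x y z. (x \<cdot> x) \<cdot> (y \<cdot> z) = (x \<cdot> (x \<cdot> y)) \<cdot> z"
begin

lemmas left_cancel = quasigroup_left_cancel[OF quasigroup]
  and right_cancel = quasigroup_right_cancel[OF quasigroup]
  and left_solvable = quasigroup_left_solvable[OF quasigroup]
  and right_solvable = quasigroup_right_solvable[OF quasigroup]

lemma right_identity_is_left_identity:
  assumes "u \<cdot> f = u"
  shows "f \<cdot> z = z"
proof -
  have "(u \<cdot> u) \<cdot> (f \<cdot> z) = (u \<cdot> u) \<cdot> z"
    using lc1[of u f z] assms by simp
  then show ?thesis
    by (rule left_cancel)
qed

lemma exists_identity: "\<exists>e. \<forall>x. e \<cdot> x = x \<and> x \<cdot> e = x"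
proof -
  fix a :: 'a
  obtain e where "a \<cdot> e = a"
    by (rule left_solvable)
  then have left_unit: "e \<cdot> x = x" for x
    by (rule right_identity_is_left_identity)
  have "x \<cdot> e = x" for x
  proof -
    obtain f where "x \<cdot> f = x"
      by (rule left_solvable)
    then have "f \<cdot> z = e \<cdot> z" for z
      by (simp add: right_identity_is_left_identity left_unit)
    then have "f = e"
      by (rule right_cancel)
    with \<open>x \<cdot> f = x\<close> show ?thesis
      by simp
  qed
  with left_unit show ?thesis
    by blast
qed

definition unit :: 'a
  where "unit = (SOME e. \<forall>x. e \<cdot> x = x \<and> x \<cdot> e = x)"

lemma unit_left [simp]: "unit \<cdot> x = x"
  and unit_right [simp]: "x \<cdot> unit = x"
  using someI_ex[OF exists_identity] unfolding unit_def by blast+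

lemma left_alternative: "(x \<cdot> x) \<cdot> y = x \<cdot> (x \<cdot> y)"
  using lc1[of x y unit] by simp

lemma lc2: "(x \<cdot> (x \<cdot> y)) \<cdot> z = x \<cdot> (x \<cdot> (y \<cdot> z))"
  using lc1[of x y z] by (simp add: left_alternative)

lemma left_inverse_property:
  assumes "p \<cdot> y = unit"
  shows "p \<cdot> (y \<cdot> z) = z"
proof -
  have "p \<cdot> z = p \<cdot> (p \<cdot> (y \<cdot> z))"
    using lc2[of p y z] assms by simp
  then show ?thesis
    by (rule left_cancel[symmetric])
qed

lemma left_inverse_property_sym:
  assumes "p \<cdot> y = unit"
  shows "y \<cdot> (p \<cdot> z) = z"
  using left_inverse_property[OF assms, of "p \<cdot> z"] by (rule left_cancel)

lemma lc2_nested: "(y \<cdot> (x \<cdot> (x \<cdot> (y \<cdot> u)))) \<cdot> z = y \<cdot> (x \<cdot> (x \<cdot> (y \<cdot> (u \<cdot> z))))"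
proof -
  define p where "p = x \<cdot> (x \<cdot> y)"
  have "x \<cdot> (x \<cdot> ((y \<cdot> (x \<cdot> (x \<cdot> (y \<cdot> u)))) \<cdot> z)) = (p \<cdot> (p \<cdot> u)) \<cdot> z"
    by (simp add: p_def lc2)
  also have "\<dots> = p \<cdot> (p \<cdot> (u \<cdot> z))"
    by (rule lc2)
  also have "\<dots> = x \<cdot> (x \<cdot> (y \<cdot> (x \<cdot> (x \<cdot> (y \<cdot> (u \<cdot> z))))))"
    by (simp add: p_def lc2)
  finally show ?thesis
    by (blast dest: left_cancel)
qed

lemma lc4: "x \<cdot> (y \<cdot> (y \<cdot> z)) = (x \<cdot> (y \<cdot> y)) \<cdot> z"
proof -
  obtain p where "p \<cdot> x = unit"
    by (rule right_solvable)
  then have "x \<cdot> (p \<cdot> z) = z" for z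
    by (rule left_inverse_property_sym)
  moreover have "x \<cdot> p = unit"
    using \<open>x \<cdot> (p \<cdot> unit) = unit\<close> by simp
  ultimately show ?thesis
    using lc2_nested[of x y p z] by simp
qed

end

theorem mainTheorem9:
  fixes mult :: "'a \<Rightarrow> 'a \<Rightarrow> 'a"
  assumes "quasigroup mult"
    and "\<forall>x y z. mult (mult x x) (mult y z) = mult (mult x (mult x y)) z"
  shows "\<forall>x y z. mult x (mult y (mult y z)) = mult (mult x (mult y y)) z"
proof -
  interpret lc1_quasigroup mult
    using assms by unfold_locales blast+
  show ?thesis
    using lc4 by blast
qed

end
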